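(* Let $G_{FL}=(\omega^{<\omega},c_{00}(\omega))$. For all finite games $A$ and $B$, every game embedding $g\colon A\to B$ and every game embedding $f\colon A\to G_{FL}$, there is a game embedding $h\colon B\to G_{FL}$ with $h\circ g=f$. (That is, $G_{FL}$ is injective, in the category of games with game embeddings, with respect to all game embeddings between finite games.)
   Context: For a set $M$, $M^{<\omega}=\bigcup_{n<\omega}M^n$ is the set of finite sequences in $M$; $|t|$ denotes the length of $t$, $t\restriction k$ its initial segment of length $k$, $t^\frown x$ the extension of $t$ by the element $x$, and $\langle\rangle$ the empty sequence. A game tree is a set $T\subseteq M^{<\omega}$ (for some set $M$) such that (i) if $t\in T$ and $k\le |t|$ then $t\restriction k\in T$, and (ii) for every $t\in T$ there is $x$ with $t^\frown x\in T$. $\mathrm{Run}(T)=\{R\in M^\omega: R\restriction n\in T\text{ for all }n<\omega\}$. A game is a pair $G=(T,A)$ with $T$ a game tree and $A\subseteq\mathrm{Run}(T)$ (runs in $A$ are won by Alice, the other runs by Bob). A game $(T,A)$ is finite if $\mathrm{Run}(T)$ is finite. A map $f\colon T_1\to T_2$ between game trees is chronological if $|f(t)|=|t|$ and $f(t\restriction k)=f(t)\restriction k$ for all $t\in T_1$, $k\le|t|$; it induces $\bar f\colon\mathrm{Run}(T_1)\to\mathrm{Run}(T_2)$ with $\bar f(R)\restriction n=f(R\restriction n)$. For games $G_i=(T_i,A_i)$, a chronological $f\colon T_1\to T_2$ is an A-morphism $G_1\to G_2$ if $\bar f[A_1]\subseteq A_2$, a B-morphism if $\bar f[\mathrm{Run}(T_1)\setminus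 A_1]\subseteq \mathrm{Run}(T_2)\setminus A_2$, and a game embedding if it is injective and both an A-morphism and a B-morphism. $c_{00}(\omega)$ denotes the set of eventually zero sequences in $\omega^\omega$; note $\mathrm{Run}(\omega^{<\omega})=\omega^\omega$. *)

theory Defs
  imports Main
begin

text \<open>Finite sequences are lists; infinite sequences (runs) are functions nat => 'a.
  The restriction R|n of a run is map R [0..<n].\<close>

definition game_tree :: "'a list set \<Rightarrow> bool" where
  "game_tree T \<longleftrightarrow>
     (\<forall>t\<in>T. \<forall>k\<le>length t. take k t \<in> T) \<and> (\<forall>t\<in>T. \<exists>x. t @ [x] \<in> T)"

definition runs :: "'a list set \<Rightarrow> (nat \<Rightarrow> 'a) set" where
  "runs T = {R. \<forall>n. map R [0..<n] \<in> T}"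

definition is_game :: "'a list set \<times> (nat \<Rightarrow> 'a) set \<Rightarrow> bool" where
  "is_game G \<longleftrightarrow> game_tree (fst G) \<and> snd G \<subseteq> runs (fst G)"

definition finite_game :: "'a list set \<times> (nat \<Rightarrow> 'a) set \<Rightarrow> bool" where
  "finite_game G \<longleftrightarrow> finite (runs (fst G))"

definition chronological :: "('a list \<Rightarrow> 'b list) \<Rightarrow> 'a list set \<Rightarrow> 'b list set \<Rightarrow> bool" where
  "chronological f T1 T2 \<longleftrightarrow>
     (\<forall>t\<in>T1. f t \<in> T2 \<and> length (f t) = length t \<and>
        (\<forall>k\<le>length t. f (take k t) = take k (f t)))"

text \<open>The induced map on runs: fbar f R restricted to n equals f (R restricted to n).\<close>
definition run_map :: "('a list \<Rightarrow> 'b list) \<Rightarrow> (nat \<Rightarrow> 'a) \<Rightarrow> (nat \<Rightarrow> 'b)" where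
  "run_map f R = (\<lambda>n. f (map R [0..<Suc n]) ! n)"

definition A_morphism :: "('a list \<Rightarrow> 'b list) \<Rightarrow> 'a list set \<times> (nat \<Rightarrow> 'a) set
    \<Rightarrow> 'b list set \<times> (nat \<Rightarrow> 'b) set \<Rightarrow> bool" where
  "A_morphism f G1 G2 \<longleftrightarrow> chronological f (fst G1) (fst G2) \<and>
     run_map f ` snd G1 \<subseteq> snd G2"

definition B_morphism :: "('a list \<Rightarrow> 'b list) \<Rightarrow> 'a list set \<times> (nat \<Rightarrow> 'a) set
    \<Rightarrow> 'b list set \<times> (nat \<Rightarrow> 'b) set \<Rightarrow> bool" where
  "B_morphism f G1 G2 \<longleftrightarrow> chronological f (fst G1) (fst G2) \<and>
     run_map f ` (runs (fst G1) - snd G1) \<subseteq> runs (fst G2) - snd G2"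

definition game_embedding :: "('a list \<Rightarrow> 'b list) \<Rightarrow> 'a list set \<times> (nat \<Rightarrow> 'a) set
    \<Rightarrow> 'b list set \<times> (nat \<Rightarrow> 'b) set \<Rightarrow> bool" where
  "game_embedding f G1 G2 \<longleftrightarrow> inj_on f (fst G1) \<and> A_morphism f G1 G2 \<and> B_morphism f G1 G2"

definition c00 :: "(nat \<Rightarrow> nat) set" where
  "c00 = {R. \<exists>N. \<forall>n\<ge>N. R n = 0}"

definition G_FL :: "nat list set \<times> (nat \<Rightarrow> nat) set" where
  "G_FL = (UNIV, c00)"

end

theory Submission
  imports Defs
begin

text \<open>A chronological map into \<open>nat list\<close> is the same as a labelling of the nonempty nodes,
  and it is injective on a game tree iff siblings receive distinct labels. Since \<open>B\<close> has
  finitely many runs, there is a depth beyond which distinct runs of \<open>B\<close> have separated, so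
  deeper nodes have a single child and determine their run. The extension copies the labels of
  \<open>f\<close> on the image of \<open>g\<close>; the other nodes up to that depth get fresh labels, larger than
  all labels \<open>f\<close> uses there, which encode a run through the node and hence separate siblings;
  deeper nodes outside the image are labelled 0 if their run is won by Alice and 1 otherwise.
  A run of \<open>B\<close> inside the image of \<open>g\<close> is the image of a run of \<open>A\<close> and inherits its
  outcome via \<open>f\<close>; every other run leaves the image and ends in zeros iff Alice wins it.\<close>

lemma game_tree_take:
  assumes "game_tree T" and "t \<in> T"
  shows "take k t \<in> T"
  using assms unfolding game_tree_def by (metis nat_le_linear take_all)

lemma snoc_last_if_take:
  assumes "length xs = Suc n" and "take n xs = ys"
  shows "xs = ys @ [last xs]"
  using assms by (cases xs rule: rev_cases) auto

lemma last_eq_nth: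
  assumes "length xs = Suc n"
  shows "last xs = xs ! n"
  using assms by (cases xs rule: rev_cases) (auto simp: nth_append)

lemma game_tree_extends_to_run:
  assumes T: "game_tree T" and t: "t \<in> T"
  shows "\<exists>R\<in>runs T. map R [0..<length t] = t"
proof -
  define e where "e = rec_nat t (\<lambda>_ u. u @ [SOME x. u @ [x] \<in> T])"
  have e_0: "e 0 = t" and e_Suc: "e (Suc n) = e n @ [SOME x. e n @ [x] \<in> T]" for n
    by (simp_all add: e_def)
  have e_in: "e n \<in> T" for n
  proof (induction n)
    case 0
    then show ?case using t e_0 by simp
  next
    case (Suc n)
    then obtain x where "e n @ [x] \<in> T" using T unfolding game_tree_def by blast
    then show ?case unfolding e_Suc by (rule someI)
  qed
  have e_length: "length (e n) = length t + n" for n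
    by (induction n) (simp_all add: e_0 e_Suc)
  have e_nth: "e m ! i = e n ! i" if "n \<le> m" and "i < length (e n)" for m n i
    using that by (induction m rule: dec_induct) (simp_all add: e_Suc nth_append e_length)
  define R where "R i = e (Suc i) ! i" for i
  have R_prefix: "map R [0..<n] = take n (e m)" if "n \<le> m" for n m
  proof (rule nth_equalityI)
    show "length (map R [0..<n]) = length (take n (e m))"
      using that by (simp add: e_length)
    fix i
    assume "i < length (map R [0..<n])"
    then show "map R [0..<n] ! i = take n (e m) ! i"
      using that e_nth[of "Suc i" m i] by (simp add: R_def e_length)
  qed
  have "map R [0..<n] \<in> T" for n
    using R_prefix[of n n] game_tree_take[OF T e_in] by simp
  then have "R \<in> runs T"
    unfolding runs_def by blast
  moreover have "take (length t) (e (length t)) = t"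
    using e_nth[of 0 "length t"] by (intro nth_equalityI) (simp_all add: e_0 e_length)
  then have "map R [0..<length t] = t"
    using R_prefix[of "length t" "length t"] by simp
  ultimately show ?thesis by blast
qed

definition separating_depth :: "'a list set \<Rightarrow> nat \<Rightarrow> bool" where
  "separating_depth T N \<longleftrightarrow>
     (\<forall>R\<in>runs T. \<forall>R'\<in>runs T. map R [0..<N] = map R' [0..<N] \<longrightarrow> R = R')"

lemma finite_runs_separating_depth:
  assumes "finite (runs T)"
  shows "\<exists>N. separating_depth T N"
proof -
  define first_diff where "first_diff R R' = (LEAST i. R i \<noteq> R' i)" for R R' :: "nat \<Rightarrow> 'a"
  have "finite (case_prod first_diff ` (runs T \<times> runs T))"
    using assms by simp
  then obtain N where "\<forall>d \<in> case_prod first_diff ` (runs T \<times> runs T). d < N"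
    by (auto simp: finite_nat_set_iff_bounded)
  then have N: "first_diff R R' < N" if "R \<in> runs T" and "R' \<in> runs T" for R R'
    using that by blast
  have "R = R'" if "R \<in> runs T" "R' \<in> runs T" "map R [0..<N] = map R' [0..<N]" for R R'
  proof (rule ccontr)
    assume "R \<noteq> R'"
    then have "\<exists>i. R i \<noteq> R' i" by (simp add: fun_eq_iff)
    then have "R (first_diff R R') \<noteq> R' (first_diff R R')"
      unfolding first_diff_def by (rule LeastI_ex)
    moreover have "first_diff R R' < N" using N that(1,2) .
    ultimately show False using that(3) by (simp add: map_eq_conv)
  qed
  then show ?thesis unfolding separating_depth_def by blast
qed

lemma separating_depth_runs_eq:
  assumes "separating_depth T N" and "N \<le> m" and "R \<in> runs T" and "R' \<in> runs T"
    and "map R [0..<m] = map R' [0..<m]"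
  shows "R = R'"
proof -
  have "take N (map R [0..<m]) = take N (map R' [0..<m])" by (simp only: assms(5))
  then have "map R [0..<N] = map R' [0..<N]" using assms(2) by (simp add: take_map)
  then show ?thesis using assms(1,3,4) unfolding separating_depth_def by blast
qed

lemma separating_depth_unique_child:
  assumes T: "game_tree T" and N: "separating_depth T N" and "N \<le> length s"
    and x: "s @ [x] \<in> T" and y: "s @ [y] \<in> T"
  shows "x = y"
proof -
  obtain R where R: "R \<in> runs T" "map R [0..<Suc (length s)] = s @ [x]"
    using game_tree_extends_to_run[OF T x] by auto
  obtain R' where R': "R' \<in> runs T" "map R' [0..<Suc (length s)] = s @ [y]"
    using game_tree_extends_to_run[OF T y] by auto
  have "map R [0..<length s] = map R' [0..<length s]"
    using R(2) R'(2) by simp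
  then have "R = R'"
    using separating_depth_runs_eq[OF N \<open>N \<le> length s\<close> R(1) R'(1)] by blast
  then show ?thesis using R(2) R'(2) by simp
qed

lemma finite_nodes_bounded_length:
  assumes "game_tree T" and "finite (runs T)"
  shows "finite {t \<in> T. length t \<le> N}"
proof -
  have "{t \<in> T. length t \<le> N} \<subseteq> (\<lambda>(R, m). map R [0..<m]) ` (runs T \<times> {..N})"
  proof
    fix t
    assume t: "t \<in> {t \<in> T. length t \<le> N}"
    then obtain R where "R \<in> runs T" "map R [0..<length t] = t"
      using game_tree_extends_to_run[OF assms(1)] by blast
    with t show "t \<in> (\<lambda>(R, m). map R [0..<m]) ` (runs T \<times> {..N})"
      by (intro image_eqI[where x = "(R, length t)"]) auto
  qed
  then show ?thesis
    by (rule finite_subset) (intro finite_imageI finite_cartesian_product assms(2) finite_atMost)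
qed

lemma chronologicalD:
  assumes "chronological f T T'" and "t \<in> T"
  shows "f t \<in> T'" and "length (f t) = length t" and "f (take k t) = take k (f t)"
proof -
  show "f t \<in> T'" and len: "length (f t) = length t"
    using assms unfolding chronological_def by blast+
  show "f (take k t) = take k (f t)"
  proof (cases "k \<le> length t")
    case True
    then show ?thesis using assms unfolding chronological_def by blast
  next
    case False
    then show ?thesis using len by simp
  qed
qed

lemma chronological_snoc:
  assumes "chronological f T T'" and "s @ [x] \<in> T"
  shows "f (s @ [x]) = f s @ [last (f (s @ [x]))]"
proof -
  have "length (f (s @ [x])) = Suc (length s)"
    using chronologicalD(2)[OF assms] by simp
  moreover have "take (length s) (f (s @ [x])) = f s"
    using chronologicalD(3)[OF assms, of "length s"] by simp
  ultimately show ?thesis by (rule snoc_last_if_take)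
qed

lemma chronological_snoc_inj:
  assumes "chronological f T T'" and "inj_on f T" and "s @ [x] \<in> T" and "s @ [y] \<in> T"
    and "last (f (s @ [x])) = last (f (s @ [y]))"
  shows "x = y"
proof -
  have "f (s @ [x]) = f s @ [last (f (s @ [x]))]"
    using chronological_snoc[OF assms(1,3)] .
  also have "\<dots> = f (s @ [y])"
    using chronological_snoc[OF assms(1,4)] assms(5) by simp
  finally show ?thesis
    using inj_onD[OF assms(2) _ assms(3,4)] by simp
qed

lemma chronological_image_take:
  assumes "game_tree TA" and "chronological g TA TB" and "u \<in> g ` TA"
  shows "take k u \<in> g ` TA"
proof -
  obtain a where a: "a \<in> TA" and u: "u = g a" using assms(3) by blast
  then have "take k u = g (take k a)" using chronologicalD(3)[OF assms(2) a] by simp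
  then show ?thesis using game_tree_take[OF assms(1) a] by simp
qed

lemma chronological_comp_the_inv_into:
  assumes "game_tree TA" and "chronological g TA TB" and "inj_on g TA"
    and "chronological f TA T'"
  shows "chronological (\<lambda>u. f (the_inv_into TA g u)) (g ` TA) T'"
  unfolding chronological_def
proof (intro ballI conjI allI impI)
  fix u assume "u \<in> g ` TA"
  then obtain a where a: "a \<in> TA" and u: "u = g a" by blast
  have inv: "the_inv_into TA g (g b) = b" if "b \<in> TA" for b
    using the_inv_into_f_f[OF assms(3) that] .
  show "f (the_inv_into TA g u) \<in> T'" and "length (f (the_inv_into TA g u)) = length u"
    using chronologicalD[OF assms(4) a] chronologicalD[OF assms(2) a] inv[OF a] u by simp_all
  fix k
  have "take k u = g (take k a)"
    using chronologicalD(3)[OF assms(2) a] u by simp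
  then have "the_inv_into TA g (take k u) = take k a"
    using inv game_tree_take[OF assms(1) a] by simp
  then show "f (the_inv_into TA g (take k u)) = take k (f (the_inv_into TA g u))"
    using chronologicalD(3)[OF assms(4) a] inv[OF a] u by simp
qed

lemma inj_on_comp_the_inv_into:
  assumes "inj_on g TA" and "inj_on f TA"
  shows "inj_on (\<lambda>u. f (the_inv_into TA g u)) (g ` TA)"
proof (rule inj_onI)
  fix u u' assume "u \<in> g ` TA" and "u' \<in> g ` TA"
    and eq: "f (the_inv_into TA g u) = f (the_inv_into TA g u')"
  then obtain a a' where a: "a \<in> TA" "u = g a" and a': "a' \<in> TA" "u' = g a'" by blast
  then have "f a = f a'" using eq the_inv_into_f_f[OF assms(1)] by simp
  then show "u = u'" using inj_onD[OF assms(2) _ a(1) a'(1)] a a' by simp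
qed

lemma run_map_eq_last:
  assumes "chronological f T T'" and "R \<in> runs T"
  shows "run_map f R n = last (f (map R [0..<Suc n]))"
proof -
  have "map R [0..<Suc n] \<in> T" using assms(2) unfolding runs_def by blast
  then have "length (f (map R [0..<Suc n])) = Suc n"
    using chronologicalD(2)[OF assms(1)] by (simp del: upt_Suc)
  then show ?thesis
    unfolding run_map_def by (rule last_eq_nth[symmetric])
qed

lemma run_map_eqI:
  assumes "\<And>n. f (map R [0..<n]) = map R' [0..<n]"
  shows "run_map f R = R'"
  unfolding run_map_def by (simp add: assms del: upt_Suc)

lemma chronological_lift_run:
  assumes TA: "game_tree TA" and g: "chronological g TA TB" "inj_on g TA"
    and R: "\<And>n. map R [0..<n] \<in> g ` TA"
  shows "\<exists>RA\<in>runs TA. \<forall>n. g (map RA [0..<n]) = map R [0..<n]"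
proof -
  define a where "a n = the_inv_into TA g (map R [0..<n])" for n
  have a_in: "a n \<in> TA" and g_a: "g (a n) = map R [0..<n]" for n
    unfolding a_def using the_inv_into_into[OF g(2) R] f_the_inv_into_f[OF g(2) R] by auto
  have a_length: "length (a n) = n" for n
    using chronologicalD(2)[OF g(1) a_in] g_a by simp
  have a_Suc: "a (Suc n) = a n @ [last (a (Suc n))]" for n
  proof -
    have "g (take n (a (Suc n))) = g (a n)"
      using chronologicalD(3)[OF g(1) a_in] g_a by (simp add: take_map del: upt_Suc)
    then have "take n (a (Suc n)) = a n"
      using inj_onD[OF g(2)] game_tree_take[OF TA a_in] a_in by blast
    then show ?thesis by (rule snoc_last_if_take[OF a_length])
  qed
  define RA where "RA i = last (a (Suc i))" for i
  have "a 0 = []" using a_length[of 0] by simp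
  then have "map RA [0..<n] = a n" for n
    by (induction n) (simp_all add: RA_def a_Suc[symmetric])
  then show ?thesis using a_in g_a unfolding runs_def by (intro bexI[of _ RA]) auto
qed

definition label_map :: "('a list \<Rightarrow> 'b) \<Rightarrow> 'a list \<Rightarrow> 'b list" where
  "label_map v t = map (\<lambda>i. v (take (Suc i) t)) [0..<length t]"

lemma length_label_map [simp]: "length (label_map v t) = length t"
  by (simp add: label_map_def)

lemma nth_label_map [simp]: "i < length t \<Longrightarrow> label_map v t ! i = v (take (Suc i) t)"
  by (simp add: label_map_def)

lemma chronological_label_map: "chronological (label_map v) T UNIV"
  unfolding chronological_def by (auto intro: nth_equalityI)

lemma run_map_label_map: "run_map (label_map v) R n = v (map R [0..<Suc n])"
  unfolding run_map_def by (simp del: upt_Suc)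

lemma chronological_eq_label_map:
  assumes "chronological f T T'" and "t \<in> T"
  shows "f t = label_map (\<lambda>u. last (f u)) t"
  using chronologicalD[OF assms] by (intro nth_equalityI) (simp_all add: last_eq_nth)

lemma inj_on_label_map:
  assumes T: "game_tree T"
    and siblings: "\<And>s x y. s @ [x] \<in> T \<Longrightarrow> s @ [y] \<in> T \<Longrightarrow> v (s @ [x]) = v (s @ [y]) \<Longrightarrow> x = y"
  shows "inj_on (label_map v) T"
proof (rule inj_onI)
  fix t t' assume t: "t \<in> T" and t': "t' \<in> T" and eq: "label_map v t = label_map v t'"
  have len: "length t = length t'" using arg_cong[OF eq, of length] by simp
  have "take n t = take n t'" for n
  proof (induction n)
    case (Suc n)
    show ?case
    proof (cases "n < length t")
      case True
      have "v (take (Suc n) t) = v (take (Suc n) t')"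
        using arg_cong[OF eq, of "\<lambda>xs. xs ! n"] True len by simp
      then have "t ! n = t' ! n"
        using siblings game_tree_take[OF T t, of "Suc n"] game_tree_take[OF T t', of "Suc n"]
          Suc.IH True len by (simp add: take_Suc_conv_app_nth)
      then show ?thesis using Suc.IH True len by (simp add: take_Suc_conv_app_nth)
    next
      case False
      then show ?thesis using Suc.IH len by simp
    qed
  qed simp
  from this[of "length t"] show "t = t'" using len by simp
qed

lemma game_embedding_runs_iff:
  assumes "game_embedding f (T1, S1) (T2, S2)" and "R \<in> runs T1"
  shows "run_map f R \<in> S2 \<longleftrightarrow> R \<in> S1"
  using assms unfolding game_embedding_def A_morphism_def B_morphism_def by auto

lemma game_embeddingI:
  assumes "chronological h T1 T2" and "inj_on h T1" and "S1 \<subseteq> runs T1"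
    and "run_map h ` runs T1 \<subseteq> runs T2"
    and "\<And>R. R \<in> runs T1 \<Longrightarrow> run_map h R \<in> S2 \<longleftrightarrow> R \<in> S1"
  shows "game_embedding h (T1, S1) (T2, S2)"
  using assms unfolding game_embedding_def A_morphism_def B_morphism_def by auto

lemma c00_iff_eventually_indicator:
  assumes "\<And>n. M \<le> n \<Longrightarrow> X n = (if P then 0 else 1)"
  shows "X \<in> c00 \<longleftrightarrow> P"
proof
  assume "X \<in> c00"
  then obtain N where "\<forall>n\<ge>N. X n = 0" unfolding c00_def by blast
  then show P using assms[of "max M N"] by (auto split: if_splits)
next
  assume P
  then show "X \<in> c00" using assms unfolding c00_def by auto
qed

locale finite_extension =
  fixes TA :: "'a list set" and SA :: "(nat \<Rightarrow> 'a) set"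
    and TB :: "'b list set" and SB :: "(nat \<Rightarrow> 'b) set"
    and g :: "'a list \<Rightarrow> 'b list" and f :: "'a list \<Rightarrow> nat list"
  assumes tree_A: "game_tree TA" and tree_B: "game_tree TB" and SB_runs: "SB \<subseteq> runs TB"
    and finite_runs_A: "finite (runs TA)" and finite_runs_B: "finite (runs TB)"
    and g_embedding: "game_embedding g (TA, SA) (TB, SB)"
    and f_embedding: "game_embedding f (TA, SA) G_FL"
begin

lemma g_chronological: "chronological g TA TB" and g_inj: "inj_on g TA"
  using g_embedding unfolding game_embedding_def A_morphism_def by simp_all

lemma f_chronological: "chronological f TA UNIV" and f_inj: "inj_on f TA"
  using f_embedding unfolding game_embedding_def A_morphism_def G_FL_def by simp_all

definition sep_depth :: nat where
  "sep_depth = (SOME N. separating_depth TB N)"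

lemma separating_sep_depth: "separating_depth TB sep_depth"
  unfolding sep_depth_def using finite_runs_separating_depth[OF finite_runs_B] by (rule someI_ex)

definition label_bound :: nat where
  "label_bound = (SOME K. \<forall>a\<in>TA. length a \<le> sep_depth \<longrightarrow> last (f a) < K)"

lemma last_f_less_label_bound:
  assumes "a \<in> TA" and "length a \<le> sep_depth"
  shows "last (f a) < label_bound"
proof -
  have "finite ((\<lambda>a. last (f a)) ` {a \<in> TA. length a \<le> sep_depth})"
    by (rule finite_imageI[OF finite_nodes_bounded_length[OF tree_A finite_runs_A]])
  then have "\<exists>K. \<forall>a\<in>TA. length a \<le> sep_depth \<longrightarrow> last (f a) < K"
    by (auto simp: finite_nat_set_iff_bounded)
  then have "\<forall>a\<in>TA. length a \<le> sep_depth \<longrightarrow> last (f a) < label_bound"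
    unfolding label_bound_def by (rule someI_ex)
  then show ?thesis using assms by blast
qed

definition run_index :: "(nat \<Rightarrow> 'b) \<Rightarrow> nat" where
  "run_index = (SOME i. inj_on i (runs TB))"

lemma inj_run_index: "inj_on run_index (runs TB)"
proof -
  have "\<exists>i :: (nat \<Rightarrow> 'b) \<Rightarrow> nat. inj_on i (runs TB)"
    using finite_imp_inj_to_nat_seg[OF finite_runs_B] by blast
  then show ?thesis unfolding run_index_def by (rule someI_ex)
qed

definition some_run :: "'b list \<Rightarrow> nat \<Rightarrow> 'b" where
  "some_run u = (SOME R. R \<in> runs TB \<and> map R [0..<length u] = u)"

lemma some_run:
  assumes "u \<in> TB"
  shows "some_run u \<in> runs TB" and "map (some_run u) [0..<length u] = u"
  using someI_ex[OF game_tree_extends_to_run[OF tree_B assms, unfolded Bex_def]]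
  unfolding some_run_def by blast+

lemma some_run_deep:
  assumes "R \<in> runs TB" and "sep_depth \<le> n"
  shows "some_run (map R [0..<n]) = R"
proof -
  have u: "map R [0..<n] \<in> TB" using assms(1) unfolding runs_def by blast
  then have "map (some_run (map R [0..<n])) [0..<n] = map R [0..<n]"
    using some_run(2)[OF u] by simp
  then show ?thesis
    by (rule separating_depth_runs_eq[OF separating_sep_depth assms(2) some_run(1)[OF u] assms(1)])
qed

definition node_label :: "'b list \<Rightarrow> nat" where
  "node_label u =
     (if u \<in> g ` TA then last (f (the_inv_into TA g u))
      else if length u \<le> sep_depth then label_bound + run_index (some_run u)
      else if some_run u \<in> SB then 0 else 1)"

definition extension :: "'b list \<Rightarrow> nat list" where
  "extension = label_map node_label"

lemma extension_extends:
  assumes a: "a \<in> TA"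
  shows "extension (g a) = f a"
proof -
  have "node_label (take (Suc i) (g a)) = last (f (take (Suc i) a))" for i
  proof -
    have "take (Suc i) a \<in> TA" using game_tree_take[OF tree_A a] .
    moreover have "take (Suc i) (g a) = g (take (Suc i) a)"
      using chronologicalD(3)[OF g_chronological a] by simp
    ultimately show ?thesis
      using the_inv_into_f_f[OF g_inj] unfolding node_label_def by simp
  qed
  then show ?thesis
    using chronologicalD(2)[OF g_chronological a]
      chronological_eq_label_map[OF f_chronological a]
    unfolding extension_def by (intro nth_equalityI) simp_all
qed

lemma node_label_image_less:
  assumes u: "u \<in> g ` TA" and short: "length u \<le> sep_depth"
  shows "node_label u < label_bound"
proof -
  obtain a where a: "a \<in> TA" "u = g a" using u by blast
  then have "length a \<le> sep_depth" using short chronologicalD(2)[OF g_chronological] by simp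
  then show ?thesis
    using a last_f_less_label_bound the_inv_into_f_f[OF g_inj] unfolding node_label_def by simp
qed

lemma node_label_siblings:
  assumes x: "s @ [x] \<in> TB" and y: "s @ [y] \<in> TB"
    and eq: "node_label (s @ [x]) = node_label (s @ [y])"
  shows "x = y"
proof (cases "sep_depth \<le> length s")
  case True
  then show ?thesis using separating_depth_unique_child[OF tree_B separating_sep_depth _ x y] by simp
next
  case False
  then have short: "length (s @ [z]) \<le> sep_depth" for z by simp
  have fresh_label: "node_label (s @ [z]) = label_bound + run_index (some_run (s @ [z]))"
    if "s @ [z] \<notin> g ` TA" for z
    using that short unfolding node_label_def by simp
  show ?thesis
  proof (cases "s @ [x] \<in> g ` TA"; cases "s @ [y] \<in> g ` TA")
    assume "s @ [x] \<in> g ` TA" and "s @ [y] \<in> g ` TA"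
    moreover note chronological_snoc_inj[OF
        chronological_comp_the_inv_into[OF tree_A g_chronological g_inj f_chronological]
        inj_on_comp_the_inv_into[OF g_inj f_inj]]
    ultimately show ?thesis using eq unfolding node_label_def by simp
  next
    assume "s @ [x] \<notin> g ` TA" and "s @ [y] \<notin> g ` TA"
    then have "run_index (some_run (s @ [x])) = run_index (some_run (s @ [y]))"
      using eq fresh_label by simp
    then have "some_run (s @ [x]) = some_run (s @ [y])"
      using inj_onD[OF inj_run_index] some_run(1) x y by blast
    then have "s @ [x] = s @ [y]"
      using some_run(2)[OF x] some_run(2)[OF y] by (simp del: upt_Suc)
    then show ?thesis by simp
  next
    assume "s @ [x] \<in> g ` TA" and "s @ [y] \<notin> g ` TA"
    then have "node_label (s @ [x]) < label_bound" and "label_bound \<le> node_label (s @ [y])"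
      using node_label_image_less fresh_label short by simp_all
    then show ?thesis using eq by simp
  next
    assume "s @ [x] \<notin> g ` TA" and "s @ [y] \<in> g ` TA"
    then have "node_label (s @ [y]) < label_bound" and "label_bound \<le> node_label (s @ [x])"
      using node_label_image_less fresh_label short by simp_all
    then show ?thesis using eq by simp
  qed
qed

lemma inj_on_extension: "inj_on extension TB"
  unfolding extension_def using tree_B node_label_siblings by (rule inj_on_label_map)

lemma extension_wins_iff:
  assumes R: "R \<in> runs TB"
  shows "run_map extension R \<in> c00 \<longleftrightarrow> R \<in> SB"
proof (cases "\<forall>n. map R [0..<n] \<in> g ` TA")
  case True
  then obtain RA where RA: "RA \<in> runs TA" and g_RA: "\<And>n. g (map RA [0..<n]) = map R [0..<n]"
    using chronological_lift_run[OF tree_A g_chronological g_inj] by blast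
  have "run_map extension R n = run_map f RA n" for n
  proof -
    have RA_prefix: "map RA [0..<Suc n] \<in> TA" using RA unfolding runs_def by blast
    have "run_map extension R n = node_label (g (map RA [0..<Suc n]))"
      unfolding extension_def run_map_label_map g_RA ..
    also have "\<dots> = last (f (map RA [0..<Suc n]))"
      using the_inv_into_f_f[OF g_inj RA_prefix] RA_prefix unfolding node_label_def by simp
    also have "\<dots> = run_map f RA n"
      using run_map_eq_last[OF f_chronological RA] by simp
    finally show ?thesis .
  qed
  then have "run_map extension R = run_map f RA" ..
  then show ?thesis
    using game_embedding_runs_iff[OF f_embedding[unfolded G_FL_def] RA]
      game_embedding_runs_iff[OF g_embedding RA] run_map_eqI[OF g_RA] by simp
next
  case False
  then obtain n0 where n0: "map R [0..<n0] \<notin> g ` TA" by blast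
  have "run_map extension R n = (if R \<in> SB then 0 else 1)" if "max n0 sep_depth \<le> n" for n
  proof -
    have prefix: "take n0 (map R [0..<Suc n]) = map R [0..<n0]"
      using that by (simp add: take_map del: upt_Suc)
    have "map R [0..<Suc n] \<notin> g ` TA"
    proof
      assume "map R [0..<Suc n] \<in> g ` TA"
      then have "take n0 (map R [0..<Suc n]) \<in> g ` TA"
        by (rule chronological_image_take[OF tree_A g_chronological])
      with n0 prefix show False by simp
    qed
    then show ?thesis
      using some_run_deep[OF R, of "Suc n"] that
      unfolding extension_def run_map_label_map node_label_def by simp
  qed
  then show ?thesis by (rule c00_iff_eventually_indicator)
qed

lemma extension_embedding: "game_embedding extension (TB, SB) G_FL"
  unfolding G_FL_def
  by (rule game_embeddingI[OF chronological_label_map[of node_label, folded extension_def]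
        inj_on_extension SB_runs]) (simp_all add: runs_def extension_wins_iff)

end

theorem mainTheorem1:
  fixes A :: "'a list set \<times> (nat \<Rightarrow> 'a) set"
    and B :: "'b list set \<times> (nat \<Rightarrow> 'b) set"
    and g :: "'a list \<Rightarrow> 'b list"
    and f :: "'a list \<Rightarrow> nat list"
  assumes "is_game A" and "is_game B"
    and "finite_game A" and "finite_game B"
    and "game_embedding g A B"
    and "game_embedding f A G_FL"
  shows "\<exists>h :: 'b list \<Rightarrow> nat list.
           game_embedding h B G_FL \<and> (\<forall>t\<in>fst A. h (g t) = f t)"
proof -
  obtain TA SA where A: "A = (TA, SA)" by (cases A)
  obtain TB SB where B: "B = (TB, SB)" by (cases B)
  interpret finite_extension TA SA TB SB g f
    using assms unfolding A B is_game_def finite_game_def by unfold_locales simp_all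
  show ?thesis
    using extension_embedding extension_extends unfolding A B by auto
qed

end
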